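(* Let $n,m,k$ be positive integers, let $X\in\mathbb{C}^{n\times n}$ be Hermitian, let $\Lambda:\mathbb{C}^{n\times n}\to\mathbb{C}^{m\times m}$ be a linear map and $Y\in\mathbb{C}^{m\times m}$. Consider the rank-constrained problem \[ (\mathrm{P})\qquad \max_{\rho\in\mathbb{C}^{n\times n}}\ \operatorname{Tr}(X\rho)\quad\text{s.t.}\quad \Lambda(\rho)=Y,\ \operatorname{Tr}(\rho)=1,\ \rho\ge 0,\ \operatorname{rank}(\rho)\le k . \] Let $\mathcal{H}_A=\mathcal{H}_B=\mathbb{C}^n\otimes\mathbb{C}^k$, let $\widetilde{X}=X\otimes\mathbb{1}_k$, and let $\widetilde{\Lambda}(\cdot)=\Lambda[\operatorname{Tr}_2(\cdot)]$, where $\operatorname{Tr}_2$ is the partial trace over the factor $\mathbb{C}^k$. Then the problem (P) is equivalent to (has the same optimal value as) the conic program \[ (\mathrm{C})\qquad \max_{\Phi_{AB}}\ \operatorname{Tr}\big[(\widetilde{X}_A\otimes\mathbb{1}_B)\Phi_{AB}\big]\quad\text{s.t.}\quad \Phi_{AB}\in\mathrm{SEP},\ \operatorname{Tr}(\Phi_{AB})=1,\ V_{AB}\Phi_{AB}=\Phi_{AB},\ (\widetilde{\Lambda}_A\otimes\mathrm{id}_B)(\Phi_{AB})=Y\otimes\operatorname{Tr}_A(\Phi_{AB}). \]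
   Context: $\mathrm{SEP}$ denotes the cone of (unnormalized) separable operators on $\mathcal{H}_A\otimes\mathcal{H}_B$, i.e. the convex hull of $\{M_A\otimes N_B: M_A\ge0,\ N_B\ge 0\}$ with $M_A,N_B$ complex positive semidefinite operators on $\mathcal{H}_A,\mathcal{H}_B$. $V_{AB}$ is the swap operator on $\mathcal{H}_A\otimes\mathcal{H}_B$, $V_{AB}\ket{\psi_1}\ket{\psi_2}=\ket{\psi_2}\ket{\psi_1}$. A subscript $A$ (resp. $B$) indicates that an operator or map acts on $\mathcal{H}_A$ (resp. $\mathcal{H}_B$); $\mathrm{id}_B$ is the identity map on operators on $\mathcal{H}_B$; $\operatorname{Tr}_A$ is the partial trace over $\mathcal{H}_A$, so both sides of the last constraint are operators on $\mathbb{C}^m\otimes\mathcal{H}_B$. *)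

theory Defs
  imports "Jordan_Normal_Form.Schur_Decomposition" "Jordan_Normal_Form.DL_Rank"
    "HOL-Library.Extended_Real"
begin

(* Conventions: an operator on C^d is a complex matrix in carrier_mat d d.
   C^a \<otimes> C^b is identified with C^(a*b), basis vector e_i \<otimes> e_j having index i*b + j
   (Kronecker convention). *)

definition mtrace :: "complex mat \<Rightarrow> complex" where
  "mtrace A = (\<Sum>i<dim_row A. A $$ (i, i))"

definition hermitian :: "complex mat \<Rightarrow> bool" where
  "hermitian A \<longleftrightarrow> square_mat A \<and> mat_adjoint A = A"

definition psd :: "nat \<Rightarrow> complex mat \<Rightarrow> bool" where
  "psd d A \<longleftrightarrow> A \<in> carrier_mat d d \<and>
     (\<forall>v \<in> carrier_vec d. let q = (A *\<^sub>v v) \<bullet>c v in Im q = 0 \<and> Re q \<ge> 0)"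

definition mrank :: "nat \<Rightarrow> complex mat \<Rightarrow> nat" where
  "mrank d A = vec_space.rank d (A :: complex mat)"

definition kron :: "complex mat \<Rightarrow> complex mat \<Rightarrow> complex mat" where
  "kron A B = mat (dim_row A * dim_row B) (dim_col A * dim_col B)
     (\<lambda>(i, j). A $$ (i div dim_row B, j div dim_col B) * B $$ (i mod dim_row B, j mod dim_col B))"

definition ptrace2 :: "nat \<Rightarrow> nat \<Rightarrow> complex mat \<Rightarrow> complex mat" where
  "ptrace2 a b M = mat a a (\<lambda>(i, j). \<Sum>l<b. M $$ (i * b + l, j * b + l))"

definition ptrace1 :: "nat \<Rightarrow> nat \<Rightarrow> complex mat \<Rightarrow> complex mat" where
  "ptrace1 a b M = mat b b (\<lambda>(i, j). \<Sum>l<a. M $$ (l * b + i, l * b + j))"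

definition swap_op :: "nat \<Rightarrow> complex mat" where
  "swap_op d = mat (d * d) (d * d) (\<lambda>(i, j). if i = (j mod d) * d + j div d then 1 else 0)"

definition lin_map_mat :: "nat \<Rightarrow> nat \<Rightarrow> (complex mat \<Rightarrow> complex mat) \<Rightarrow> bool" where
  "lin_map_mat d1 d2 L \<longleftrightarrow>
     (\<forall>A \<in> carrier_mat d1 d1. L A \<in> carrier_mat d2 d2) \<and>
     (\<forall>A \<in> carrier_mat d1 d1. \<forall>B \<in> carrier_mat d1 d1. L (A + B) = L A + L B) \<and>
     (\<forall>c. \<forall>A \<in> carrier_mat d1 d1. L (c \<cdot>\<^sub>m A) = c \<cdot>\<^sub>m L A)"

(* (L \<otimes> id_B) applied to an operator on C^dA \<otimes> C^dB, L : dA x dA \<rightarrow> m x m.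
   (L \<otimes> id)(\<Phi>) = \<Sum>_{b,b'} L(\<Phi>_{b b'}) \<otimes> |b><b'|, \<Phi>_{b b'} the blocks of \<Phi>. *)
definition map_tensor_id :: "nat \<Rightarrow> nat \<Rightarrow> nat \<Rightarrow> (complex mat \<Rightarrow> complex mat) \<Rightarrow> complex mat \<Rightarrow> complex mat" where
  "map_tensor_id dA dB m L \<Phi> = mat (m * dB) (m * dB)
     (\<lambda>(i, j). L (mat dA dA (\<lambda>(a, a'). \<Phi> $$ (a * dB + i mod dB, a' * dB + j mod dB)))
               $$ (i div dB, j div dB))"

(* cone of separable operators on C^dA \<otimes> C^dB: convex hull of {M \<otimes> N | M, N \<ge> 0},
   i.e. finite sums of such products (the generating set is a cone containing 0) *)
definition SEP :: "nat \<Rightarrow> nat \<Rightarrow> complex mat set" where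
  "SEP dA dB = {\<Phi>. \<exists>(r::nat) M N. (\<forall>i<r. psd dA (M i) \<and> psd dB (N i)) \<and>
       \<Phi> = mat (dA * dB) (dA * dB) (\<lambda>ij. \<Sum>i<r. kron (M i) (N i) $$ ij)}"

definition valP :: "nat \<Rightarrow> nat \<Rightarrow> nat \<Rightarrow> complex mat \<Rightarrow> (complex mat \<Rightarrow> complex mat) \<Rightarrow> complex mat \<Rightarrow> ereal" where
  "valP n m k X \<Lambda> Y = Sup {ereal (Re (mtrace (X * \<rho>))) | \<rho>.
      \<rho> \<in> carrier_mat n n \<and> \<Lambda> \<rho> = Y \<and> mtrace \<rho> = 1 \<and> psd n \<rho> \<and> mrank n \<rho> \<le> k}"

definition valC :: "nat \<Rightarrow> nat \<Rightarrow> nat \<Rightarrow> complex mat \<Rightarrow> (complex mat \<Rightarrow> complex mat) \<Rightarrow> complex mat \<Rightarrow> ereal" where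
  "valC n m k X \<Lambda> Y =
    (let d = n * k;
         Xt = kron X (1\<^sub>m k);
         \<Lambda>t = (\<lambda>\<rho>. \<Lambda> (ptrace2 n k \<rho>))
     in Sup {ereal (Re (mtrace (kron Xt (1\<^sub>m d) * \<Phi>))) | \<Phi>.
        \<Phi> \<in> SEP d d \<and> mtrace \<Phi> = 1 \<and> swap_op d * \<Phi> = \<Phi> \<and>
        map_tensor_id d d m \<Lambda>t \<Phi> = kron Y (ptrace1 d d \<Phi>)})"

end

(* If \<rho> is feasible for (P), its Gram decomposition \<rho> = \<Sum>\<^sub>l w\<^sub>l w\<^sub>l\<^sup>* with at most k terms
   gives a unit vector \<psi> \<in> \<complex>\<^sup>n \<otimes> \<complex>\<^sup>k with Tr\<^sub>2 |\<psi>\<rangle>\<langle>\<psi>| = \<rho>, and \<Phi> = |\<psi>\<otimes>\<psi>\<rangle>\<langle>\<psi>\<otimes>\<psi>| is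
   feasible for (C) with the same value.
   Conversely, a separable \<Phi> is a sum of projectors onto product vectors u\<^sub>t \<otimes> w\<^sub>t, and
   invariance under the swap forces each of them into the symmetric subspace, so that
   \<Phi> = \<Sum>\<^sub>t |\<psi>\<^sub>t\<otimes>\<psi>\<^sub>t\<rangle>\<langle>\<psi>\<^sub>t\<otimes>\<psi>\<^sub>t|. By linearity of \<Lambda> the constraint splits into
   \<Lambda>(Tr\<^sub>2 |\<psi>\<^sub>t\<rangle>\<langle>\<psi>\<^sub>t|) = \<parallel>\<psi>\<^sub>t\<parallel>\<^sup>2 Y for every t. Hence each normalised Tr\<^sub>2 |\<psi>\<^sub>t\<rangle>\<langle>\<psi>\<^sub>t| is
   feasible for (P), and the value of \<Phi> is the average of their values with the weights
   \<parallel>\<psi>\<^sub>t\<parallel>\<^sup>4, which sum to Tr \<Phi> = 1. *)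

theory Submission
  imports Defs
begin

lemma mult_add_less_mult:
  fixes i j a b :: nat
  assumes "i < a" "j < b"
  shows "i * b + j < a * b"
proof -
  have "i * b + j < Suc i * b" using assms(2) by simp
  also have "\<dots> \<le> a * b" using assms(1) by (intro mult_le_mono1) simp
  finally show ?thesis .
qed

lemma sum_lessThan_mult:
  fixes f :: "nat \<Rightarrow> 'a::comm_monoid_add"
  shows "(\<Sum>p<a * b. f p) = (\<Sum>i<a. \<Sum>j<b. f (i * b + j))"
proof -
  have "sum f {i * b..<i * b + b} = (\<Sum>j<b. f (i * b + j))" for i
    using sum.shift_bounds_nat_ivl[of f 0 "i * b" b] by (simp add: atLeast0LessThan add.commute)
  then show ?thesis by (simp flip: sum.nat_group)
qed

lemma sum_lessThan_mult_div_mod: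
  fixes f :: "nat \<Rightarrow> nat \<Rightarrow> 'a::comm_monoid_add"
  shows "(\<Sum>p<a * b. f (p div b) (p mod b)) = (\<Sum>i<a. \<Sum>j<b. f i j)"
  unfolding sum_lessThan_mult by (intro sum.cong refl) simp

section \<open>Quadratic forms and positive semidefinite matrices\<close>

definition qform :: "nat \<Rightarrow> complex mat \<Rightarrow> (nat \<Rightarrow> complex) \<Rightarrow> complex" where
  "qform d A f = (\<Sum>p<d. \<Sum>q<d. cnj (f p) * A $$ (p, q) * f q)"

lemma qform_cong: "(\<And>i. i < d \<Longrightarrow> f i = g i) \<Longrightarrow> qform d A f = qform d A g"
  unfolding qform_def by (auto intro!: sum.cong)

lemma mult_mat_vec_cscalar_prod:
  assumes "A \<in> carrier_mat d d" "v \<in> carrier_vec d"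
  shows "(A *\<^sub>v v) \<bullet>c v = qform d A (\<lambda>i. v $ i)"
proof -
  have "(A *\<^sub>v v) \<bullet>c v = (\<Sum>p<d. (\<Sum>q<d. A $$ (p, q) * v $ q) * cnj (v $ p))"
    using assms unfolding scalar_prod_def mult_mat_vec_def
    by (auto simp: atLeast0LessThan intro!: sum.cong)
  also have "\<dots> = qform d A (\<lambda>i. v $ i)"
    unfolding qform_def sum_distrib_right by (intro sum.cong refl) (simp add: ac_simps)
  finally show ?thesis .
qed

lemma psd_iff_qform:
  "psd d A \<longleftrightarrow> A \<in> carrier_mat d d \<and> (\<forall>f. Im (qform d A f) = 0 \<and> 0 \<le> Re (qform d A f))"
proof
  assume psd: "psd d A"
  then have A: "A \<in> carrier_mat d d" by (simp add: psd_def)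
  moreover have "qform d A f = (A *\<^sub>v vec d f) \<bullet>c vec d f" for f
    by (subst mult_mat_vec_cscalar_prod[OF A]) (auto intro: qform_cong)
  ultimately show "A \<in> carrier_mat d d \<and> (\<forall>f. Im (qform d A f) = 0 \<and> 0 \<le> Re (qform d A f))"
    using psd unfolding psd_def Let_def by (metis vec_carrier)
next
  assume "A \<in> carrier_mat d d \<and> (\<forall>f. Im (qform d A f) = 0 \<and> 0 \<le> Re (qform d A f))"
  then show "psd d A" unfolding psd_def Let_def using mult_mat_vec_cscalar_prod by auto
qed

lemma psd_carrier: "psd d A \<Longrightarrow> A \<in> carrier_mat d d"
  by (simp add: psd_def)

lemma sum_mult_indicator_right:
  fixes g :: "nat \<Rightarrow> complex"
  assumes "j < d"
  shows "(\<Sum>q<d. g q * (if q = j then s else 0)) = g j * s"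
  using assms by (simp add: if_distrib if_distribR sum.delta cong: if_cong)

lemma sum_mult_indicator_left:
  fixes g :: "nat \<Rightarrow> complex"
  assumes "j < d"
  shows "(\<Sum>q<d. (if q = j then s else 0) * g q) = s * g j"
  using assms by (simp add: if_distrib if_distribR sum.delta cong: if_cong)

lemma qform_add_indicator:
  assumes j: "j < d"
  shows "qform d A (\<lambda>p. f p + (if p = j then s else 0)) = qform d A f
    + s * (\<Sum>p<d. cnj (f p) * A $$ (p, j)) + cnj s * (\<Sum>q<d. A $$ (j, q) * f q)
    + cnj s * s * A $$ (j, j)"
proof -
  let ?e = "\<lambda>q::nat. if q = j then s else 0"
  have ce: "cnj (?e p) = (if p = j then cnj s else 0)" for p by simp
  have "qform d A (\<lambda>p. f p + ?e p) =
     qform d A f + (\<Sum>p<d. \<Sum>q<d. cnj (f p) * A $$ (p, q) * ?e q)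
       + (\<Sum>p<d. cnj (?e p) * (\<Sum>q<d. A $$ (p, q) * f q))
       + (\<Sum>p<d. cnj (?e p) * (\<Sum>q<d. A $$ (p, q) * ?e q))"
    unfolding qform_def sum.distrib[symmetric] sum_distrib_left
    by (intro sum.cong refl) (simp add: algebra_simps)
  also have "(\<Sum>p<d. \<Sum>q<d. cnj (f p) * A $$ (p, q) * ?e q) = s * (\<Sum>p<d. cnj (f p) * A $$ (p, j))"
    unfolding sum_mult_indicator_right[OF j] by (simp add: sum_distrib_left ac_simps)
  also have "(\<Sum>p<d. cnj (?e p) * (\<Sum>q<d. A $$ (p, q) * f q)) = cnj s * (\<Sum>q<d. A $$ (j, q) * f q)"
    unfolding ce sum_mult_indicator_left[OF j] ..
  also have "(\<Sum>p<d. cnj (?e p) * (\<Sum>q<d. A $$ (p, q) * ?e q)) = cnj s * s * A $$ (j, j)"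
    unfolding ce sum_mult_indicator_right[OF j] sum_mult_indicator_left[OF j] by simp
  finally show ?thesis .
qed

lemma qform_indicator:
  assumes i: "i < d"
  shows "qform d A (\<lambda>p. if p = i then a else 0) = cnj a * a * A $$ (i, i)"
  using qform_add_indicator[OF i, of A "\<lambda>_. 0" a] by (simp add: qform_def)

lemma qform_two_indicators:
  assumes i: "i < d" and j: "j < d" and "i \<noteq> j"
  shows "qform d A (\<lambda>p. (if p = i then a else 0) + (if p = j then s else 0)) =
    cnj a * a * A $$ (i, i) + s * cnj a * A $$ (i, j) + cnj s * A $$ (j, i) * a + cnj s * s * A $$ (j, j)"
proof -
  have "(\<Sum>p<d. cnj (if p = i then a else 0) * A $$ (p, j)) = cnj a * A $$ (i, j)"
    using sum_mult_indicator_left[OF i, of "cnj a"] by (simp add: if_distrib cong: if_cong)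
  moreover have "(\<Sum>q<d. A $$ (j, q) * (if q = i then a else 0)) = A $$ (j, i) * a"
    by (rule sum_mult_indicator_right[OF i])
  ultimately show ?thesis
    using qform_add_indicator[OF j, of A "\<lambda>p. if p = i then a else 0" s] qform_indicator[OF i, of A a]
    by (simp add: ac_simps)
qed

lemma psd_diag:
  assumes "psd d A" "i < d"
  shows "Im (A $$ (i, i)) = 0" "0 \<le> Re (A $$ (i, i))"
  using assms qform_indicator[OF assms(2), of A 1] unfolding psd_iff_qform by (metis complex_cnj_one mult_1)+

lemma psd_entry_cnj:
  assumes psd: "psd d A" and i: "i < d" and j: "j < d"
  shows "A $$ (j, i) = cnj (A $$ (i, j))"
proof (cases "i = j")
  case True
  then show ?thesis using psd_diag[OF psd i] by (simp add: complex_eq_iff)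
next
  case False
  have "Im (qform d A g) = 0" for g using psd unfolding psd_iff_qform by auto
  from this[of "\<lambda>p. (if p = i then 1 else 0) + (if p = j then 1 else 0)"]
    this[of "\<lambda>p. (if p = i then 1 else 0) + (if p = j then \<i> else 0)"]
  have "Im (A $$ (i, j) + A $$ (j, i)) = 0" "Re (A $$ (i, j) - A $$ (j, i)) = 0"
    using qform_two_indicators[OF i j False, of A 1 1] qform_two_indicators[OF i j False, of A 1 \<i>]
      psd_diag[OF psd i] psd_diag[OF psd j] by simp_all
  then show ?thesis by (simp add: complex_eq_iff)
qed

text \<open>Otherwise the form is negative at \<open>e\<^sub>i - t cnj (A\<^sub>i\<^sub>j) e\<^sub>j\<close> for large \<open>t\<close>.\<close>

lemma psd_zero_diag:
  assumes psd: "psd d A" and i: "i < d" and j: "j < d" and zero: "A $$ (j, j) = 0"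
  shows "A $$ (i, j) = 0" "A $$ (j, i) = 0"
proof -
  show "A $$ (i, j) = 0"
  proof (rule ccontr)
    let ?z = "A $$ (i, j)"
    assume "?z \<noteq> 0"
    then have pos: "cmod ?z ^ 2 > 0" by simp
    have ne: "i \<noteq> j" using \<open>?z \<noteq> 0\<close> zero by auto
    define t where "t = (Re (A $$ (i, i)) + 1) / (2 * cmod ?z ^ 2)"
    define s where "s = - (of_real t * cnj ?z)"
    let ?f = "\<lambda>p. (if p = i then 1 else 0) + (if p = j then s else 0)"
    have "qform d A ?f = A $$ (i, i) - 2 * of_real t * (?z * cnj ?z)"
      using qform_two_indicators[OF i j ne, of A 1 s] zero psd_entry_cnj[OF psd i j]
      unfolding s_def by (simp add: algebra_simps)
    also have "\<dots> = A $$ (i, i) - 2 * of_real t * of_real (cmod ?z ^ 2)"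
      by (simp add: complex_mult_cnj cmod_power2)
    finally have "Re (qform d A ?f) = Re (A $$ (i, i)) - 2 * t * cmod ?z ^ 2"
      by simp
    also have "\<dots> = -1" using pos unfolding t_def by (simp add: field_simps)
    finally have "Re (qform d A ?f) = -1" .
    moreover have "0 \<le> Re (qform d A ?f)" using psd unfolding psd_iff_qform by auto
    ultimately show False by simp
  qed
  then show "A $$ (j, i) = 0" using psd_entry_cnj[OF psd i j] by simp
qed

definition outer :: "nat \<Rightarrow> (nat \<Rightarrow> complex) \<Rightarrow> complex mat" where
  "outer d f = mat d d (\<lambda>(p, q). f p * cnj (f q))"

definition outer_sum :: "nat \<Rightarrow> 'a set \<Rightarrow> ('a \<Rightarrow> nat \<Rightarrow> complex) \<Rightarrow> complex mat" where
  "outer_sum d T w = mat d d (\<lambda>(p, q). \<Sum>t\<in>T. w t p * cnj (w t q))"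

definition sqnorm :: "nat \<Rightarrow> (nat \<Rightarrow> complex) \<Rightarrow> complex" where
  "sqnorm d f = (\<Sum>a<d. f a * cnj (f a))"

lemma outer_carrier [simp]: "outer d f \<in> carrier_mat d d"
  and outer_dim [simp]: "dim_row (outer d f) = d" "dim_col (outer d f) = d"
  and outer_index [simp]: "p < d \<Longrightarrow> q < d \<Longrightarrow> outer d f $$ (p, q) = f p * cnj (f q)"
  by (simp_all add: outer_def)

lemma outer_sum_carrier [simp]: "outer_sum d T w \<in> carrier_mat d d"
  and outer_sum_dim [simp]: "dim_row (outer_sum d T w) = d" "dim_col (outer_sum d T w) = d"
  and outer_sum_index [simp]:
    "p < d \<Longrightarrow> q < d \<Longrightarrow> outer_sum d T w $$ (p, q) = (\<Sum>t\<in>T. w t p * cnj (w t q))"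
  by (simp_all add: outer_sum_def)

lemma outer_sum_singleton: "outer_sum d {t} w = outer d (w t)"
  by (intro eq_matI) simp_all

lemma outer_sum_cong:
  assumes "\<And>t. t \<in> T \<Longrightarrow> outer d (w t) = outer d (w' t)"
  shows "outer_sum d T w = outer_sum d T w'"
proof (rule eq_matI)
  fix p q assume "p < dim_row (outer_sum d T w')" "q < dim_col (outer_sum d T w')"
  then have pq: "p < d" "q < d" by simp_all
  have "w t p * cnj (w t q) = w' t p * cnj (w' t q)" if "t \<in> T" for t
    using arg_cong[OF assms[OF that], of "\<lambda>A. A $$ (p, q)"] pq by simp
  then have "(\<Sum>t\<in>T. w t p * cnj (w t q)) = (\<Sum>t\<in>T. w' t p * cnj (w' t q))"
    by (rule sum.cong[OF refl])
  then show "outer_sum d T w $$ (p, q) = outer_sum d T w' $$ (p, q)" using pq by simp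
qed simp_all

lemma outer_sum_insert:
  "finite T \<Longrightarrow> t \<notin> T \<Longrightarrow> outer_sum d (insert t T) w = outer d (w t) + outer_sum d T w"
  by (intro eq_matI) simp_all

lemma mult_cnj_self: "z * cnj z = complex_of_real ((cmod z)\<^sup>2)"
  by (simp add: complex_mult_cnj cmod_power2)

lemma sqnorm_real: "sqnorm d f = complex_of_real (\<Sum>a<d. (cmod (f a))\<^sup>2)"
  unfolding sqnorm_def mult_cnj_self by simp

lemma qform_outer_sum:
  "qform d (outer_sum d T w) f = (\<Sum>t\<in>T. complex_of_real ((cmod (\<Sum>p<d. cnj (f p) * w t p))\<^sup>2))"
proof -
  have "qform d (outer_sum d T w) f =
      (\<Sum>t\<in>T. \<Sum>p<d. \<Sum>q<d. (cnj (f p) * w t p) * cnj (cnj (f q) * w t q))"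
    unfolding qform_def
    by (simp add: sum_distrib_left sum_distrib_right sum.swap[of _ T] ac_simps)
  also have "\<dots> = (\<Sum>t\<in>T. (\<Sum>p<d. cnj (f p) * w t p) * cnj (\<Sum>p<d. cnj (f p) * w t p))"
    by (simp only: cnj_sum sum_product)
  finally show ?thesis unfolding mult_cnj_self .
qed

lemma psd_outer_sum: "psd d (outer_sum d T w)"
  unfolding psd_iff_qform qform_outer_sum
  by (auto simp: Re_sum Im_sum intro!: sum_nonneg)

lemma psd_outer: "psd d (outer d f)"
  using psd_outer_sum[of d "{()}" "\<lambda>_. f"] by (simp add: outer_sum_singleton)

lemma mrank_outer_sum_le_card:
  assumes "finite T"
  shows "mrank d (outer_sum d T w) \<le> card T"
  using assms
proof (induction T rule: finite_induct)
  case empty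
  have "outer_sum d {} w = 0\<^sub>m d d" by (intro eq_matI) simp_all
  then show ?case unfolding mrank_def by (simp add: vec_space.rank_0I)
next
  case (insert t T)
  have "mrank d (outer d (w t)) \<le> 1"
    unfolding mrank_def
    by (rule vec_space.rank_le_1_product_entries[where f="w t" and g="\<lambda>q. cnj (w t q)"]) auto
  moreover have "mrank d (outer_sum d (insert t T) w) \<le> mrank d (outer d (w t)) + mrank d (outer_sum d T w)"
    unfolding outer_sum_insert[OF insert(1,2)] mrank_def by (rule vec_space.rank_subadditive) auto
  ultimately show ?case using insert by simp
qed

lemma mtrace_outer_sum: "mtrace (outer_sum d T w) = (\<Sum>t\<in>T. sqnorm d (w t))"
  unfolding mtrace_def sqnorm_def by (simp add: sum.swap[of _ "{..<d}"])

section \<open>Gram decomposition by Schur complements\<close>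

definition schur_compl :: "nat \<Rightarrow> complex mat \<Rightarrow> nat \<Rightarrow> complex mat" where
  "schur_compl d M j = mat d d (\<lambda>(p, q). M $$ (p, q) - M $$ (p, j) * M $$ (j, q) / M $$ (j, j))"

lemma schur_compl_carrier [simp]: "schur_compl d M j \<in> carrier_mat d d"
  and schur_compl_dim [simp]: "dim_row (schur_compl d M j) = d" "dim_col (schur_compl d M j) = d"
  and schur_compl_index [simp]: "p < d \<Longrightarrow> q < d \<Longrightarrow>
    schur_compl d M j $$ (p, q) = M $$ (p, q) - M $$ (p, j) * M $$ (j, q) / M $$ (j, j)"
  by (simp_all add: schur_compl_def)

lemma qform_schur_compl:
  assumes j: "j < d" and nz: "M $$ (j, j) \<noteq> 0" and real: "cnj (M $$ (j, j)) = M $$ (j, j)"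
  shows "qform d (schur_compl d M j) f =
    qform d M (\<lambda>p. f p + (if p = j then - (\<Sum>q<d. M $$ (j, q) * f q) / M $$ (j, j) else 0))"
proof -
  let ?m = "M $$ (j, j)"
  let ?b = "\<Sum>p<d. cnj (f p) * M $$ (p, j)"
  let ?g = "\<Sum>q<d. M $$ (j, q) * f q"
  have "qform d (schur_compl d M j) f =
      (\<Sum>p<d. \<Sum>q<d. cnj (f p) * M $$ (p, q) * f q - (cnj (f p) * M $$ (p, j)) * (M $$ (j, q) * f q) / ?m)"
    unfolding qform_def by (intro sum.cong refl) (simp add: algebra_simps)
  also have "\<dots> = qform d M f - ?b * ?g / ?m"
    unfolding qform_def sum_subtractf sum_product sum_divide_distrib by simp
  also have "\<dots> = qform d M f + (- ?g / ?m) * ?b + cnj (- ?g / ?m) * ?g + cnj (- ?g / ?m) * (- ?g / ?m) * ?m"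
    using nz real by (simp add: field_simps)
  also have "\<dots> = qform d M (\<lambda>p. f p + (if p = j then - ?g / ?m else 0))"
    by (rule qform_add_indicator[OF j, symmetric])
  finally show ?thesis .
qed

lemma psd_schur_compl:
  assumes psd: "psd d M" and j: "j < d" and nz: "M $$ (j, j) \<noteq> 0"
  shows "psd d (schur_compl d M j)"
proof -
  have real: "cnj (M $$ (j, j)) = M $$ (j, j)" using psd_diag[OF psd j] by (simp add: complex_eq_iff)
  show ?thesis using psd unfolding psd_iff_qform qform_schur_compl[OF j nz real] by simp
qed

lemma (in vec_space) card_indpt_in_span_cols_le_rank:
  assumes A: "A \<in> carrier_mat n nc" and U: "U \<subseteq> span (set (cols A))" and li: "lin_indpt U"
  shows "card U \<le> rank A"
proof -
  let ?S = "set (cols A)"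
  have S: "?S \<subseteq> carrier_vec n" using A cols_dim by blast
  have sub: "submodule class_ring (span ?S) V" using S by (simp add: span_is_submodule)
  interpret W: vectorspace class_ring "span_vs ?S"
    using S span_is_subspace subspace_def subspace_is_vs by simp
  have "W.lin_indpt U" using span_li_not_depend(2)[OF U sub] li by simp
  then have "card U \<le> W.dim" using W.li_le_dim(2)[OF fin_dim_span_cols[OF A]] U by simp
  then show ?thesis unfolding rank_def .
qed

lemma (in vec_space) span_index_eq_0:
  assumes B: "B \<subseteq> carrier_vec n" and j: "j < n" and zero: "\<And>x. x \<in> B \<Longrightarrow> x $ j = 0"
    and y: "y \<in> span B"
  shows "y $ j = 0"
proof -
  obtain a A where A: "y = lincomb a A" "finite A" "A \<subseteq> B"
    using y unfolding span_def by blast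
  have "y $ j = (\<Sum>x\<in>A. a x * x $ j)" using A lincomb_index[OF j] B by auto
  also have "\<dots> = 0" using A zero by (intro sum.neutral) auto
  finally show ?thesis .
qed

lemma set_cols_eq_image: "set (cols A) = col A ` {..<dim_col A}"
  unfolding cols_def by auto

text \<open>The columns of the complement vanish in row \<open>j\<close> and lie in the column span of \<open>M\<close>;
  a basis of them together with the pivot column \<open>col M j\<close> is independent in that span.\<close>

lemma mrank_schur_compl:
  assumes M: "M \<in> carrier_mat d d" and j: "j < d" and nz: "M $$ (j, j) \<noteq> 0"
  shows "mrank d (schur_compl d M j) < mrank d M"
proof -
  interpret vec_space "TYPE(complex)" d .
  let ?M' = "schur_compl d M j"
  let ?c = "col M j"
  obtain B where max: "maximal B (\<lambda>T. T \<subseteq> set (cols ?M') \<and> lin_indpt T)"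
    using maximal_exists[of "\<lambda>T. T \<subseteq> set (cols ?M') \<and> lin_indpt T" "card (set (cols ?M'))" "{}"]
    by (meson List.finite_set card_mono empty_iff empty_subsetI finite_lin_indpt2 rev_finite_subset)
  then have B: "B \<subseteq> set (cols ?M')" "lin_indpt B" and rank': "rank ?M' = card B"
    using rank_card_indpt[OF schur_compl_carrier max] unfolding maximal_def by auto
  have "finite B" using B(1) finite_subset by blast
  have Bc: "B \<subseteq> carrier_vec d" using B(1) cols_dim[of ?M'] by simp
  have "?c $ j \<noteq> 0" using M j nz by simp
  moreover have "x $ j = 0" if "x \<in> B" for x
    using that B(1) j nz unfolding set_cols_eq_image by auto
  ultimately have c_notin: "?c \<notin> span B" using span_index_eq_0[OF Bc j] by blast
  then have c_notinB: "?c \<notin> B" using in_own_span[OF Bc] by blast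
  have li: "lin_indpt (insert ?c B)"
    using lin_dep_iff_in_span[OF Bc B(2) _ c_notinB] c_notin M j by simp
  have cols: "set (cols M) \<subseteq> carrier_vec d" using M cols_dim by blast
  have sub: "submodule class_ring (span (set (cols M))) V" using cols by (simp add: span_is_submodule)
  have col: "col M i \<in> span (set (cols M))" if "i < d" for i
    using span_mem[OF cols] M that unfolding set_cols_eq_image by auto
  have "col ?M' l \<in> span (set (cols M))" if l: "l < d" for l
  proof -
    have "col ?M' l = col M l + (- (M $$ (j, l) / M $$ (j, j))) \<cdot>\<^sub>v ?c"
      using l M j by (intro eq_vecI) (auto simp: field_simps)
    then show ?thesis using submodule.m_closed[OF sub] submodule.smult_closed[OF sub] col l j by simp
  qed
  then have "B \<subseteq> span (set (cols M))" using B(1) unfolding set_cols_eq_image by auto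
  moreover have "?c \<in> span (set (cols M))" using col[OF j] .
  ultimately have "card (insert ?c B) \<le> rank M"
    using card_indpt_in_span_cols_le_rank[OF M _ li] by blast
  then show ?thesis using rank' c_notinB \<open>finite B\<close> unfolding mrank_def by simp
qed

lemma psd_eq_zero_if_diag_zero:
  assumes psd: "psd d M" and diag: "\<And>j. j < d \<Longrightarrow> M $$ (j, j) = 0"
  shows "M = 0\<^sub>m d d"
  using psd_zero_diag(1)[OF psd _ _ diag] psd_carrier[OF psd] by (intro eq_matI) auto

lemma psd_schur_compl_plus_outer:
  assumes psd: "psd d M" and j: "j < d"
  defines "v \<equiv> \<lambda>p. M $$ (p, j) / complex_of_real (sqrt (Re (M $$ (j, j))))"
  shows "M = schur_compl d M j + outer d v"
proof (rule eq_matI)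
  fix p q assume "p < dim_row (schur_compl d M j + outer d v)" "q < dim_col (schur_compl d M j + outer d v)"
  then have p: "p < d" and q: "q < d" by simp_all
  let ?r = "complex_of_real (sqrt (Re (M $$ (j, j))))"
  have "?r * cnj ?r = M $$ (j, j)"
    using psd_diag[OF psd j] by (simp add: complex_eq_iff flip: of_real_mult)
  then have "v p * cnj (v q) = M $$ (p, j) * M $$ (j, q) / M $$ (j, j)"
    unfolding v_def using psd_entry_cnj[OF psd q j] by simp
  then show "M $$ (p, q) = (schur_compl d M j + outer d v) $$ (p, q)" using p q by simp
qed (use psd_carrier[OF psd] in auto)

lemma psd_gram_decomposition:
  assumes "psd d M" and "mrank d M \<le> k"
  shows "\<exists>w. M = outer_sum d {..<k} w"
  using assms
proof (induction k arbitrary: M)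
  case 0
  have "M $$ (j, j) = 0" if j: "j < d" for j
  proof (rule ccontr)
    assume "M $$ (j, j) \<noteq> 0"
    from mrank_schur_compl[OF psd_carrier[OF "0.prems"(1)] j this] show False
      using "0.prems"(2) by simp
  qed
  then have "M = outer_sum d {..<0} (\<lambda>_ _. 0)"
    using psd_eq_zero_if_diag_zero[OF "0.prems"(1)] by (intro eq_matI) auto
  then show ?case by blast
next
  case (Suc k)
  show ?case
  proof (cases "\<exists>j<d. M $$ (j, j) \<noteq> 0")
    case True
    then obtain j where j: "j < d" "M $$ (j, j) \<noteq> 0" by blast
    have "mrank d (schur_compl d M j) \<le> k"
      using mrank_schur_compl[OF psd_carrier[OF Suc.prems(1)] j] Suc.prems(2) by simp
    then obtain w where w: "schur_compl d M j = outer_sum d {..<k} w"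
      using Suc.IH psd_schur_compl[OF Suc.prems(1) j] by blast
    obtain v where "M = schur_compl d M j + outer d v"
      using psd_schur_compl_plus_outer[OF Suc.prems(1) j(1)] by blast
    moreover have "outer_sum d {..<k} w = outer_sum d {..<k} (w(k := v))"
      by (rule outer_sum_cong) simp
    ultimately have "M = outer_sum d {..<Suc k} (w(k := v))"
      by (intro eq_matI) (simp_all add: w lessThan_Suc outer_sum_insert)
    then show ?thesis by blast
  next
    case False
    then have "M = outer_sum d {..<Suc k} (\<lambda>_ _. 0)"
      using psd_eq_zero_if_diag_zero[OF Suc.prems(1)] by (intro eq_matI) auto
    then show ?thesis by blast
  qed
qed

section \<open>Product vectors and the swap operator\<close>

definition tensor :: "nat \<Rightarrow> (nat \<Rightarrow> complex) \<Rightarrow> (nat \<Rightarrow> complex) \<Rightarrow> nat \<Rightarrow> complex" where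
  "tensor d u w p = u (p div d) * w (p mod d)"

definition swap_index :: "nat \<Rightarrow> nat \<Rightarrow> nat" where
  "swap_index d p = (p mod d) * d + p div d"

lemma div_mod_less_square:
  fixes p d :: nat
  assumes "p < d * d"
  shows "p div d < d" "p mod d < d"
proof -
  have "0 < d" using assms by (cases d) simp_all
  then show "p div d < d" "p mod d < d" using assms by (simp_all add: less_mult_imp_div_less)
qed

lemma swap_index_less: "p < d * d \<Longrightarrow> swap_index d p < d * d"
  unfolding swap_index_def by (intro mult_add_less_mult div_mod_less_square)

lemma swap_index_div_mod:
  assumes "p < d * d"
  shows "swap_index d p div d = p mod d" "swap_index d p mod d = p div d"
  using div_mod_less_square[OF assms] unfolding swap_index_def by simp_all

lemma swap_index_swap_index: "p < d * d \<Longrightarrow> swap_index d (swap_index d p) = p"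
  using swap_index_div_mod unfolding swap_index_def[of d "swap_index d p"] by simp

lemma tensor_swap_index: "p < d * d \<Longrightarrow> tensor d u w (swap_index d p) = tensor d w u p"
  unfolding tensor_def swap_index_div_mod[of p d] by simp

lemma swap_op_mult_index:
  assumes \<Phi>: "\<Phi> \<in> carrier_mat (d * d) (d * d)" and p: "p < d * d" and q: "q < d * d"
  shows "(swap_op d * \<Phi>) $$ (p, q) = \<Phi> $$ (swap_index d p, q)"
proof -
  have "p = (s mod d) * d + s div d \<longleftrightarrow> s = swap_index d p" if "s < d * d" for s
    using swap_index_swap_index[OF that] swap_index_swap_index[OF p]
    unfolding swap_index_def by metis
  then have "(swap_op d * \<Phi>) $$ (p, q) = (\<Sum>s<d * d. (if s = swap_index d p then 1 else 0) * \<Phi> $$ (s, q))"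
    using \<Phi> p q unfolding swap_op_def
    by (auto simp: scalar_prod_def atLeast0LessThan intro!: sum.cong)
  also have "\<dots> = \<Phi> $$ (swap_index d p, q)"
    using sum_mult_indicator_left[OF swap_index_less[OF p], of 1] by simp
  finally show ?thesis .
qed

lemma sqnorm_tensor: "sqnorm (d * d) (tensor d u w) = sqnorm d u * sqnorm d w"
  unfolding sqnorm_def tensor_def sum_lessThan_mult_div_mod[of "\<lambda>a b. u a * w b * cnj (u a * w b)"]
  by (simp add: sum_product ac_simps)

lemma kron_outer_sum:
  "kron (outer_sum d S u) (outer_sum d R w) = outer_sum (d * d) (S \<times> R) (\<lambda>(s, r). tensor d (u s) (w r))"
proof (rule eq_matI)
  fix p q assume "p < dim_row (outer_sum (d * d) (S \<times> R) (\<lambda>(s, r). tensor d (u s) (w r)))"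
    "q < dim_col (outer_sum (d * d) (S \<times> R) (\<lambda>(s, r). tensor d (u s) (w r)))"
  then have "p < d * d" "q < d * d" by simp_all
  then show "kron (outer_sum d S u) (outer_sum d R w) $$ (p, q) =
      outer_sum (d * d) (S \<times> R) (\<lambda>(s, r). tensor d (u s) (w r)) $$ (p, q)"
    using div_mod_less_square
    by (simp add: kron_def tensor_def sum_product sum.cartesian_product case_prod_beta ac_simps)
qed (simp_all add: kron_def)

lemma kron_outer: "kron (outer d u) (outer d w) = outer (d * d) (tensor d u w)"
  using kron_outer_sum[of d "{()}" "\<lambda>_. u" "{()}" "\<lambda>_. w"] by (simp add: outer_sum_singleton)

lemma SEP_eq_outer_sum_tensor:
  assumes "\<Phi> \<in> SEP d d"
  obtains T :: "(nat \<times> nat \<times> nat) set" and u w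
  where "finite T" "\<Phi> = outer_sum (d * d) T (\<lambda>t. tensor d (u t) (w t))"
proof -
  obtain r :: nat and M N where MN: "\<And>i. i < r \<Longrightarrow> psd d (M i) \<and> psd d (N i)"
    and \<Phi>: "\<Phi> = mat (d * d) (d * d) (\<lambda>x. \<Sum>i<r. kron (M i) (N i) $$ x)"
    using assms unfolding SEP_def by blast
  have "\<exists>W. A = outer_sum d {..<d} W" if "psd d A" for A
    using psd_gram_decomposition[OF that] vec_space.rank_le_nc[OF psd_carrier[OF that]]
    unfolding mrank_def by blast
  then have "\<forall>i. \<exists>U. i < r \<longrightarrow> M i = outer_sum d {..<d} U" "\<forall>i. \<exists>W. i < r \<longrightarrow> N i = outer_sum d {..<d} W"
    using MN by blast+
  then obtain U W where UW: "\<And>i. i < r \<Longrightarrow> M i = outer_sum d {..<d} (U i) \<and> N i = outer_sum d {..<d} (W i)"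
    using choice[of "\<lambda>i U. i < r \<longrightarrow> M i = outer_sum d {..<d} U"]
      choice[of "\<lambda>i W. i < r \<longrightarrow> N i = outer_sum d {..<d} W"] by blast
  define T where "T = {..<r} \<times> {..<d} \<times> {..<d}"
  define u where "u t = U (fst t) (fst (snd t))" for t :: "nat \<times> nat \<times> nat"
  define w where "w t = W (fst t) (snd (snd t))" for t :: "nat \<times> nat \<times> nat"
  have "\<Phi> = outer_sum (d * d) T (\<lambda>t. tensor d (u t) (w t))"
  proof (rule eq_matI)
    fix p q assume "p < dim_row (outer_sum (d * d) T (\<lambda>t. tensor d (u t) (w t)))"
      "q < dim_col (outer_sum (d * d) T (\<lambda>t. tensor d (u t) (w t)))"
    then have pq: "p < d * d" "q < d * d" by simp_all
    have "\<Phi> $$ (p, q) = (\<Sum>i<r. outer_sum (d * d) ({..<d} \<times> {..<d}) (\<lambda>(a, b). tensor d (U i a) (W i b)) $$ (p, q))"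
      unfolding \<Phi> using pq UW by (simp add: kron_outer_sum)
    also have "\<dots> = outer_sum (d * d) T (\<lambda>t. tensor d (u t) (w t)) $$ (p, q)"
      using pq unfolding T_def u_def w_def by (simp add: sum.cartesian_product case_prod_beta)
    finally show "\<Phi> $$ (p, q) = outer_sum (d * d) T (\<lambda>t. tensor d (u t) (w t)) $$ (p, q)" .
  qed (simp_all add: \<Phi>)
  moreover have "finite T" unfolding T_def by simp
  ultimately show ?thesis using that by blast
qed

text \<open>The diagonal entry of \<open>(V - 1) \<Phi> (V - 1)\<^sup>*\<close> at \<open>p\<close> is the sum over \<open>t\<close> of
  \<open>|z t (swap_index d p) - z t p|\<^sup>2\<close>; for \<open>V \<Phi> = \<Phi>\<close> it vanishes.\<close>

lemma swap_invariant_outer_sum: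
  assumes T: "finite T" and sw: "swap_op d * outer_sum (d * d) T z = outer_sum (d * d) T z"
    and t: "t \<in> T" and p: "p < d * d"
  shows "z t (swap_index d p) = z t p"
proof -
  let ?\<Phi> = "outer_sum (d * d) T z"
  let ?p' = "swap_index d p"
  have p': "?p' < d * d" by (rule swap_index_less[OF p])
  have row: "?\<Phi> $$ (?p', q) = ?\<Phi> $$ (p, q)" if "q < d * d" for q
    using sw swap_op_mult_index[OF outer_sum_carrier[of "d * d" T z] p that] by simp
  have "(\<Sum>t\<in>T. (z t ?p' - z t p) * cnj (z t ?p' - z t p)) =
      ?\<Phi> $$ (?p', ?p') - ?\<Phi> $$ (?p', p) - ?\<Phi> $$ (p, ?p') + ?\<Phi> $$ (p, p)"
    using p p' by (simp add: sum_subtractf sum.distrib algebra_simps)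
  also have "\<dots> = 0" using row[OF p'] row[OF p] by simp
  finally have "(\<Sum>t\<in>T. (cmod (z t ?p' - z t p))\<^sup>2) = 0"
    unfolding mult_cnj_self by (metis of_real_eq_0_iff of_real_sum)
  then have "\<forall>t\<in>T. (cmod (z t ?p' - z t p))\<^sup>2 = 0" by (simp add: sum_nonneg_eq_0_iff[OF T])
  then show ?thesis using t by simp
qed

lemma swap_invariant_tensor_eq_tensor_square:
  assumes sym: "\<And>p. p < d * d \<Longrightarrow> tensor d u w (swap_index d p) = tensor d u w p"
  shows "\<exists>\<psi>. outer (d * d) (tensor d u w) = outer (d * d) (tensor d \<psi> \<psi>)"
proof (cases "\<forall>a<d. u a = 0")
  case True
  then have "outer (d * d) (tensor d u w) = outer (d * d) (tensor d (\<lambda>_. 0) (\<lambda>_. 0))"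
    using div_mod_less_square by (intro eq_matI) (simp_all add: tensor_def)
  then show ?thesis by blast
next
  case False
  then obtain a0 where a0: "a0 < d" "u a0 \<noteq> 0" by blast
  define c where "c = w a0 / u a0"
  have "u b * w a = u a * w b" if "a < d" "b < d" for a b
    using sym[OF mult_add_less_mult[OF that]] tensor_swap_index[OF mult_add_less_mult[OF that]] that
    by (simp add: tensor_def) (metis mult.commute)
  then have w: "w b = c * u b" if "b < d" for b
    using a0 that unfolding c_def by (simp add: field_simps)
  define r where "r = complex_of_real (sqrt (cmod c))"
  have r: "r * r * cnj (r * r) = c * cnj c"
    unfolding r_def mult_cnj_self by (simp flip: of_real_mult add: power2_eq_square)
  have "outer (d * d) (tensor d u w) = outer (d * d) (tensor d (\<lambda>a. r * u a) (\<lambda>a. r * u a))"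
  proof (rule eq_matI)
    fix p q assume "p < dim_row (outer (d * d) (tensor d (\<lambda>a. r * u a) (\<lambda>a. r * u a)))"
      "q < dim_col (outer (d * d) (tensor d (\<lambda>a. r * u a) (\<lambda>a. r * u a)))"
    then have pq: "p < d * d" "q < d * d" by simp_all
    have "tensor d u w p * cnj (tensor d u w q) =
        (c * cnj c) * (u (p div d) * u (p mod d) * cnj (u (q div d) * u (q mod d)))"
      using div_mod_less_square[OF pq(1)] div_mod_less_square[OF pq(2)] by (simp add: tensor_def w)
    also have "\<dots> = tensor d (\<lambda>a. r * u a) (\<lambda>a. r * u a) p * cnj (tensor d (\<lambda>a. r * u a) (\<lambda>a. r * u a) q)"
      unfolding r[symmetric] tensor_def by simp
    finally show "outer (d * d) (tensor d u w) $$ (p, q) =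
        outer (d * d) (tensor d (\<lambda>a. r * u a) (\<lambda>a. r * u a)) $$ (p, q)" using pq by simp
  qed simp_all
  then show ?thesis by blast
qed

lemma SEP_swap_invariant_eq_outer_sum_tensor_square:
  assumes sep: "\<Phi> \<in> SEP d d" and sw: "swap_op d * \<Phi> = \<Phi>"
  obtains T :: "(nat \<times> nat \<times> nat) set" and \<psi>
  where "finite T" "\<Phi> = outer_sum (d * d) T (\<lambda>t. tensor d (\<psi> t) (\<psi> t))"
proof -
  obtain T :: "(nat \<times> nat \<times> nat) set" and u w
    where T: "finite T" and \<Phi>: "\<Phi> = outer_sum (d * d) T (\<lambda>t. tensor d (u t) (w t))"
    using SEP_eq_outer_sum_tensor[OF sep] by blast
  have "\<forall>t\<in>T. \<exists>\<psi>. outer (d * d) (tensor d (u t) (w t)) = outer (d * d) (tensor d \<psi> \<psi>)"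
    using swap_invariant_outer_sum[OF T sw[unfolded \<Phi>]]
    by (blast intro: swap_invariant_tensor_eq_tensor_square)
  then obtain \<psi> where "\<And>t. t \<in> T \<Longrightarrow> outer (d * d) (tensor d (u t) (w t)) = outer (d * d) (tensor d (\<psi> t) (\<psi> t))"
    by (metis bchoice)
  then have "\<Phi> = outer_sum (d * d) T (\<lambda>t. tensor d (\<psi> t) (\<psi> t))"
    unfolding \<Phi> by (rule outer_sum_cong)
  with T that show ?thesis by blast
qed

section \<open>Partial traces and the linear constraint\<close>

lemma lin_map_matD:
  assumes "lin_map_mat d1 d2 L"
  shows "\<And>A. A \<in> carrier_mat d1 d1 \<Longrightarrow> L A \<in> carrier_mat d2 d2"
    and "\<And>A B. A \<in> carrier_mat d1 d1 \<Longrightarrow> B \<in> carrier_mat d1 d1 \<Longrightarrow> L (A + B) = L A + L B"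
    and "\<And>c A. A \<in> carrier_mat d1 d1 \<Longrightarrow> L (c \<cdot>\<^sub>m A) = c \<cdot>\<^sub>m L A"
  using assms unfolding lin_map_mat_def by auto

lemma lin_map_zero:
  assumes L: "lin_map_mat d1 d2 L"
  shows "L (0\<^sub>m d1 d1) = 0\<^sub>m d2 d2"
proof -
  have "L (0\<^sub>m d1 d1) = L (0 \<cdot>\<^sub>m 0\<^sub>m d1 d1)" by (simp add: smult_zero_mat)
  also have "\<dots> = 0 \<cdot>\<^sub>m L (0\<^sub>m d1 d1)" by (rule lin_map_matD(3)[OF L]) simp
  also have "\<dots> = 0\<^sub>m d2 d2" using lin_map_matD(1)[OF L, of "0\<^sub>m d1 d1"] by (intro eq_matI) auto
  finally show ?thesis .
qed

lemma lin_map_sum: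
  assumes L: "lin_map_mat d1 d2 L" and T: "finite T" and A: "\<And>t. t \<in> T \<Longrightarrow> A t \<in> carrier_mat d1 d1"
  shows "L (mat d1 d1 (\<lambda>x. \<Sum>t\<in>T. c t * A t $$ x)) = mat d2 d2 (\<lambda>x. \<Sum>t\<in>T. c t * L (A t) $$ x)"
  using T A
proof (induction T rule: finite_induct)
  case empty
  have "mat d1 d1 (\<lambda>x. \<Sum>t\<in>{}. c t * A t $$ x) = 0\<^sub>m d1 d1" by (intro eq_matI) auto
  moreover have "mat d2 d2 (\<lambda>x. \<Sum>t\<in>{}. c t * L (A t) $$ x) = 0\<^sub>m d2 d2" by (intro eq_matI) auto
  ultimately show ?case using lin_map_zero[OF L] by simp
next
  case (insert s T)
  have As: "A s \<in> carrier_mat d1 d1" using insert by simp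
  have "mat d1 d1 (\<lambda>x. \<Sum>t\<in>insert s T. c t * A t $$ x) = c s \<cdot>\<^sub>m A s + mat d1 d1 (\<lambda>x. \<Sum>t\<in>T. c t * A t $$ x)"
    using insert(1,2) As by (intro eq_matI) auto
  then have "L (mat d1 d1 (\<lambda>x. \<Sum>t\<in>insert s T. c t * A t $$ x)) =
      c s \<cdot>\<^sub>m L (A s) + mat d2 d2 (\<lambda>x. \<Sum>t\<in>T. c t * L (A t) $$ x)"
    using lin_map_matD(2,3)[OF L] insert As by simp
  also have "\<dots> = mat d2 d2 (\<lambda>x. \<Sum>t\<in>insert s T. c t * L (A t) $$ x)"
    using insert(1,2) lin_map_matD(1)[OF L As] by (intro eq_matI) auto
  finally show ?case .
qed

lemma ptrace2_carrier [simp]: "ptrace2 n k A \<in> carrier_mat n n"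
  by (simp add: ptrace2_def)

lemma ptrace2_smult: "A \<in> carrier_mat (n * k) (n * k) \<Longrightarrow> ptrace2 n k (c \<cdot>\<^sub>m A) = c \<cdot>\<^sub>m ptrace2 n k A"
  by (intro eq_matI) (auto simp: ptrace2_def sum_distrib_left mult_add_less_mult)

lemma lin_map_comp_ptrace2:
  assumes "lin_map_mat n m L"
  shows "lin_map_mat (n * k) m (\<lambda>\<rho>. L (ptrace2 n k \<rho>))"
proof -
  have "ptrace2 n k (A + B) = ptrace2 n k A + ptrace2 n k B"
    if "A \<in> carrier_mat (n * k) (n * k)" "B \<in> carrier_mat (n * k) (n * k)" for A B
    using that by (intro eq_matI) (auto simp: ptrace2_def sum.distrib mult_add_less_mult)
  then show ?thesis using lin_map_matD[OF assms] ptrace2_smult unfolding lin_map_mat_def by simp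
qed

lemma ptrace2_outer: "ptrace2 n k (outer (n * k) f) = outer_sum n {..<k} (\<lambda>l i. f (i * k + l))"
  by (intro eq_matI) (auto simp: ptrace2_def mult_add_less_mult)

lemma mtrace_ptrace2_outer: "mtrace (ptrace2 n k (outer (n * k) f)) = sqnorm (n * k) f"
  unfolding ptrace2_outer mtrace_outer_sum sqnorm_def sum_lessThan_mult[of _ n k]
  by (rule sum.swap)

lemma ptrace1_outer_sum_tensor_square:
  "ptrace1 d d (outer_sum (d * d) T (\<lambda>t. tensor d (\<psi> t) (\<psi> t))) =
    mat d d (\<lambda>(b, b'). \<Sum>t\<in>T. sqnorm d (\<psi> t) * (\<psi> t b * cnj (\<psi> t b')))"
proof (rule eq_matI)
  fix b b' assume "b < dim_row (mat d d (\<lambda>(b, b'). \<Sum>t\<in>T. sqnorm d (\<psi> t) * (\<psi> t b * cnj (\<psi> t b'))))"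
    "b' < dim_col (mat d d (\<lambda>(b, b'). \<Sum>t\<in>T. sqnorm d (\<psi> t) * (\<psi> t b * cnj (\<psi> t b'))))"
  then have b: "b < d" "b' < d" by simp_all
  then have "ptrace1 d d (outer_sum (d * d) T (\<lambda>t. tensor d (\<psi> t) (\<psi> t))) $$ (b, b') =
      (\<Sum>l<d. \<Sum>t\<in>T. (\<psi> t l * cnj (\<psi> t l)) * (\<psi> t b * cnj (\<psi> t b')))"
    by (auto simp: ptrace1_def tensor_def mult_add_less_mult mult_ac intro!: sum.cong)
  also have "\<dots> = (\<Sum>t\<in>T. sqnorm d (\<psi> t) * (\<psi> t b * cnj (\<psi> t b')))"
    unfolding sqnorm_def by (subst sum.swap) (simp add: sum_distrib_right)
  finally show "ptrace1 d d (outer_sum (d * d) T (\<lambda>t. tensor d (\<psi> t) (\<psi> t))) $$ (b, b') =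
      mat d d (\<lambda>(b, b'). \<Sum>t\<in>T. sqnorm d (\<psi> t) * (\<psi> t b * cnj (\<psi> t b'))) $$ (b, b')"
    using b by simp
qed (simp_all add: ptrace1_def)

lemma map_tensor_id_outer_sum_tensor_square:
  assumes L: "lin_map_mat d m L" and T: "finite T"
  shows "map_tensor_id d d m L (outer_sum (d * d) T (\<lambda>t. tensor d (\<psi> t) (\<psi> t))) =
    mat (m * d) (m * d) (\<lambda>(i, j). \<Sum>t\<in>T. (\<psi> t (i mod d) * cnj (\<psi> t (j mod d))) * L (outer d (\<psi> t)) $$ (i div d, j div d))"
proof (rule eq_matI)
  fix i j assume "i < dim_row (mat (m * d) (m * d) (\<lambda>(i, j). \<Sum>t\<in>T. (\<psi> t (i mod d) * cnj (\<psi> t (j mod d))) * L (outer d (\<psi> t)) $$ (i div d, j div d)))"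
    "j < dim_col (mat (m * d) (m * d) (\<lambda>(i, j). \<Sum>t\<in>T. (\<psi> t (i mod d) * cnj (\<psi> t (j mod d))) * L (outer d (\<psi> t)) $$ (i div d, j div d)))"
  then have ij: "i < m * d" "j < m * d" by simp_all
  then have "0 < d" by (cases d) simp_all
  then have mod: "i mod d < d" "j mod d < d" by simp_all
  have div: "i div d < m" "j div d < m" using ij by (simp_all add: less_mult_imp_div_less)
  have "mat d d (\<lambda>(a, a'). outer_sum (d * d) T (\<lambda>t. tensor d (\<psi> t) (\<psi> t)) $$ (a * d + i mod d, a' * d + j mod d))
      = mat d d (\<lambda>x. \<Sum>t\<in>T. (\<psi> t (i mod d) * cnj (\<psi> t (j mod d))) * outer d (\<psi> t) $$ x)"
    using mod by (intro eq_matI) (auto simp: tensor_def mult_add_less_mult ac_simps intro!: sum.cong)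
  then show "map_tensor_id d d m L (outer_sum (d * d) T (\<lambda>t. tensor d (\<psi> t) (\<psi> t))) $$ (i, j) =
    mat (m * d) (m * d) (\<lambda>(i, j). \<Sum>t\<in>T. (\<psi> t (i mod d) * cnj (\<psi> t (j mod d))) * L (outer d (\<psi> t)) $$ (i div d, j div d)) $$ (i, j)"
    using ij div by (simp add: map_tensor_id_def lin_map_sum[OF L T outer_carrier])
qed (simp_all add: map_tensor_id_def)

text \<open>Write \<open>a t\<close> for the defect \<open>L (outer d (\<psi> t)) $$ (\<alpha>, \<beta>) - sqnorm d (\<psi> t) * y\<close>. Pairing the
  vanishing combination with the conjugate weights \<open>cnj (a t)\<close>, linearity of \<open>L\<close> gives
  \<open>\<Sum>t. cnj (a t) * a t = 0\<close>.\<close>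

lemma lin_map_outer_sum_weights_vanish:
  assumes L: "lin_map_mat d m L" and T: "finite T" and \<alpha>: "\<alpha> < m" and \<beta>: "\<beta> < m"
    and comb: "\<And>b b'. b < d \<Longrightarrow> b' < d \<Longrightarrow>
      (\<Sum>t\<in>T. (L (outer d (\<psi> t)) $$ (\<alpha>, \<beta>) - sqnorm d (\<psi> t) * y) * (\<psi> t b * cnj (\<psi> t b'))) = 0"
    and t: "t \<in> T"
  shows "L (outer d (\<psi> t)) $$ (\<alpha>, \<beta>) = sqnorm d (\<psi> t) * y"
proof -
  define a where "a t = L (outer d (\<psi> t)) $$ (\<alpha>, \<beta>) - sqnorm d (\<psi> t) * y" for t
  define c where "c t = cnj (a t)" for t
  have conj_comb: "(\<Sum>t\<in>T. c t * outer d (\<psi> t) $$ (b, b')) = 0" if "b < d" "b' < d" for b b'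
    using arg_cong[OF comb[OF that(2,1)], of cnj] that
    unfolding a_def[symmetric] c_def by (simp add: cnj_sum mult_ac)
  have "mat d d (\<lambda>x. \<Sum>t\<in>T. c t * outer d (\<psi> t) $$ x) = 0\<^sub>m d d"
    using conj_comb by (intro eq_matI) auto
  then have zero: "mat m m (\<lambda>x. \<Sum>t\<in>T. c t * L (outer d (\<psi> t)) $$ x) = 0\<^sub>m m m"
    using lin_map_sum[OF L T outer_carrier, of c \<psi>] lin_map_zero[OF L] by simp
  have image: "(\<Sum>t\<in>T. c t * L (outer d (\<psi> t)) $$ (\<alpha>, \<beta>)) = 0"
    using arg_cong[OF zero, of "\<lambda>A. A $$ (\<alpha>, \<beta>)"] \<alpha> \<beta> by simp
  have "(\<Sum>t\<in>T. c t * sqnorm d (\<psi> t)) = (\<Sum>b<d. \<Sum>t\<in>T. c t * outer d (\<psi> t) $$ (b, b))"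
    unfolding sqnorm_def sum_distrib_left by (subst sum.swap) (simp add: mult_ac)
  also have "\<dots> = 0" using conj_comb by simp
  finally have trace: "(\<Sum>t\<in>T. c t * sqnorm d (\<psi> t)) = 0" .
  have "(\<Sum>t\<in>T. c t * a t) =
      (\<Sum>t\<in>T. c t * L (outer d (\<psi> t)) $$ (\<alpha>, \<beta>)) - (\<Sum>t\<in>T. c t * sqnorm d (\<psi> t)) * y"
    unfolding a_def by (simp add: right_diff_distrib sum_subtractf sum_distrib_right mult.assoc)
  also have "\<dots> = 0" unfolding image trace by simp
  finally have "(\<Sum>t\<in>T. complex_of_real ((cmod (a t))\<^sup>2)) = 0"
    unfolding c_def by (simp only: mult.commute[of "cnj _"] mult_cnj_self)
  then have "(\<Sum>t\<in>T. (cmod (a t))\<^sup>2) = 0" by (metis of_real_eq_0_iff of_real_sum)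
  then show ?thesis using t by (simp add: sum_nonneg_eq_0_iff[OF T] a_def)
qed

lemma map_tensor_id_constraint_termwise:
  assumes L: "lin_map_mat d m L" and Y: "Y \<in> carrier_mat m m" and T: "finite T"
    and \<Phi>: "\<Phi> = outer_sum (d * d) T (\<lambda>t. tensor d (\<psi> t) (\<psi> t))"
    and con: "map_tensor_id d d m L \<Phi> = kron Y (ptrace1 d d \<Phi>)"
    and t: "t \<in> T"
  shows "L (outer d (\<psi> t)) = sqnorm d (\<psi> t) \<cdot>\<^sub>m Y"
proof (rule eq_matI)
  fix \<alpha> \<beta> assume "\<alpha> < dim_row (sqnorm d (\<psi> t) \<cdot>\<^sub>m Y)" "\<beta> < dim_col (sqnorm d (\<psi> t) \<cdot>\<^sub>m Y)"
  then have \<alpha>\<beta>: "\<alpha> < m" "\<beta> < m" using Y by simp_all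
  have "(\<Sum>t\<in>T. (L (outer d (\<psi> t)) $$ (\<alpha>, \<beta>) - sqnorm d (\<psi> t) * Y $$ (\<alpha>, \<beta>)) * (\<psi> t b * cnj (\<psi> t b'))) = 0"
    if b: "b < d" "b' < d" for b b'
  proof -
    have ij: "\<alpha> * d + b < m * d" "\<beta> * d + b' < m * d" using \<alpha>\<beta> b by (simp_all add: mult_add_less_mult)
    have "(\<Sum>t\<in>T. (\<psi> t b * cnj (\<psi> t b')) * L (outer d (\<psi> t)) $$ (\<alpha>, \<beta>)) =
        Y $$ (\<alpha>, \<beta>) * (\<Sum>t\<in>T. sqnorm d (\<psi> t) * (\<psi> t b * cnj (\<psi> t b')))"
      using arg_cong[OF con, of "\<lambda>A. A $$ (\<alpha> * d + b, \<beta> * d + b')"] ij b Y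
      unfolding \<Phi> map_tensor_id_outer_sum_tensor_square[OF L T] ptrace1_outer_sum_tensor_square
      by (simp add: kron_def)
    then show ?thesis by (simp add: algebra_simps sum_subtractf sum_distrib_left)
  qed
  from lin_map_outer_sum_weights_vanish[OF L T \<alpha>\<beta> this t]
  show "L (outer d (\<psi> t)) $$ (\<alpha>, \<beta>) = (sqnorm d (\<psi> t) \<cdot>\<^sub>m Y) $$ (\<alpha>, \<beta>)"
    using \<alpha>\<beta> Y by simp
qed (use lin_map_matD(1)[OF L outer_carrier] Y in auto)

lemma kron_dim [simp]:
  "dim_row (kron A B) = dim_row A * dim_row B" "dim_col (kron A B) = dim_col A * dim_col B"
  by (simp_all add: kron_def)

lemma kron_carrier: "A \<in> carrier_mat a a \<Longrightarrow> B \<in> carrier_mat b b \<Longrightarrow> kron A B \<in> carrier_mat (a * b) (a * b)"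
  by auto

lemma kron_index:
  "i < dim_row A * dim_row B \<Longrightarrow> j < dim_col A * dim_col B \<Longrightarrow>
    kron A B $$ (i, j) = A $$ (i div dim_row B, j div dim_col B) * B $$ (i mod dim_row B, j mod dim_col B)"
  by (simp add: kron_def)

lemma mtrace_mult:
  assumes "K \<in> carrier_mat d d" "B \<in> carrier_mat d d"
  shows "mtrace (K * B) = (\<Sum>p<d. \<Sum>q<d. K $$ (p, q) * B $$ (q, p))"
  using assms unfolding mtrace_def by (auto simp: atLeast0LessThan scalar_prod_def intro!: sum.cong)

lemma mtrace_mult_outer_sum:
  assumes K: "K \<in> carrier_mat d d"
  shows "mtrace (K * outer_sum d T z) = (\<Sum>t\<in>T. qform d K (z t))"
proof -
  have "mtrace (K * outer_sum d T z) = (\<Sum>p<d. \<Sum>q<d. \<Sum>t\<in>T. cnj (z t p) * K $$ (p, q) * z t q)"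
    unfolding mtrace_mult[OF K outer_sum_carrier]
    by (intro sum.cong refl) (simp add: sum_distrib_left mult_ac)
  also have "\<dots> = (\<Sum>t\<in>T. qform d K (z t))"
    unfolding qform_def by (simp add: sum.swap[of _ T])
  finally show ?thesis .
qed

lemma qform_kron_one:
  assumes A: "A \<in> carrier_mat a a"
  shows "qform (a * b) (kron A (1\<^sub>m b)) f =
    (\<Sum>i<a. \<Sum>i'<a. A $$ (i, i') * (\<Sum>l<b. cnj (f (i * b + l)) * f (i' * b + l)))"
proof -
  have "qform (a * b) (kron A (1\<^sub>m b)) f =
     (\<Sum>i<a. \<Sum>l<b. \<Sum>i'<a. \<Sum>l'<b. cnj (f (i * b + l)) * (A $$ (i, i') * (if l = l' then 1 else 0)) * f (i' * b + l'))"
    unfolding qform_def sum_lessThan_mult[of _ a b]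
    using A mult_add_less_mult by (intro sum.cong refl) (auto simp: kron_index)
  also have "\<dots> = (\<Sum>i<a. \<Sum>l<b. \<Sum>i'<a. cnj (f (i * b + l)) * A $$ (i, i') * f (i' * b + l))"
    by (intro sum.cong refl) (simp add: if_distrib if_distribR sum.delta cong: if_cong)
  also have "\<dots> = (\<Sum>i<a. \<Sum>i'<a. \<Sum>l<b. cnj (f (i * b + l)) * A $$ (i, i') * f (i' * b + l))"
    by (rule sum.cong[OF refl], rule sum.swap)
  also have "\<dots> = (\<Sum>i<a. \<Sum>i'<a. A $$ (i, i') * (\<Sum>l<b. cnj (f (i * b + l)) * f (i' * b + l)))"
    by (intro sum.cong refl) (simp add: sum_distrib_left mult_ac)
  finally show ?thesis .
qed

lemma qform_kron_one_tensor:
  assumes A: "A \<in> carrier_mat d d"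
  shows "qform (d * d) (kron A (1\<^sub>m d)) (tensor d u w) = sqnorm d w * qform d A u"
proof -
  have "qform (d * d) (kron A (1\<^sub>m d)) (tensor d u w) =
      (\<Sum>a<d. \<Sum>a'<d. A $$ (a, a') * (\<Sum>l<d. cnj (tensor d u w (a * d + l)) * tensor d u w (a' * d + l)))"
    by (rule qform_kron_one[OF A])
  also have "\<dots> = (\<Sum>a<d. \<Sum>a'<d. sqnorm d w * (cnj (u a) * A $$ (a, a') * u a'))"
    unfolding sqnorm_def tensor_def
    by (intro sum.cong refl) (simp add: sum_distrib_left sum_distrib_right mult_ac)
  also have "\<dots> = sqnorm d w * qform d A u" unfolding qform_def by (simp add: sum_distrib_left)
  finally show ?thesis .
qed

lemma qform_kron_one_eq_mtrace_ptrace2: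
  assumes X: "X \<in> carrier_mat n n"
  shows "qform (n * k) (kron X (1\<^sub>m k)) f = mtrace (X * ptrace2 n k (outer (n * k) f))"
proof -
  have "mtrace (X * ptrace2 n k (outer (n * k) f)) =
      (\<Sum>i<n. \<Sum>i'<n. X $$ (i, i') * ptrace2 n k (outer (n * k) f) $$ (i', i))"
    by (rule mtrace_mult[OF X ptrace2_carrier])
  also have "\<dots> = (\<Sum>i<n. \<Sum>i'<n. X $$ (i, i') * (\<Sum>l<k. cnj (f (i * k + l)) * f (i' * k + l)))"
    unfolding ptrace2_outer by (intro sum.cong refl) (simp add: mult.commute)
  finally show ?thesis using qform_kron_one[OF X, of k f] by simp
qed

lemma mtrace_objective_outer_sum_tensor_square:
  assumes X: "X \<in> carrier_mat n n"
  shows "mtrace (kron (kron X (1\<^sub>m k)) (1\<^sub>m (n * k)) * outer_sum ((n * k) * (n * k)) T (\<lambda>t. tensor (n * k) (\<psi> t) (\<psi> t)))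
    = (\<Sum>t\<in>T. sqnorm (n * k) (\<psi> t) * mtrace (X * ptrace2 n k (outer (n * k) (\<psi> t))))"
proof -
  have Xk: "kron X (1\<^sub>m k) \<in> carrier_mat (n * k) (n * k)" using X by (simp add: kron_carrier)
  then have K: "kron (kron X (1\<^sub>m k)) (1\<^sub>m (n * k)) \<in> carrier_mat ((n * k) * (n * k)) ((n * k) * (n * k))"
    by (simp add: kron_carrier)
  show ?thesis
    unfolding mtrace_mult_outer_sum[OF K] qform_kron_one_tensor[OF Xk] qform_kron_one_eq_mtrace_ptrace2[OF X] ..
qed

section \<open>Comparing the optimal values\<close>

lemma mtrace_smult: "A \<in> carrier_mat n n \<Longrightarrow> mtrace (c \<cdot>\<^sub>m A) = c * mtrace A"
  unfolding mtrace_def by (simp add: sum_distrib_left)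

lemma outer_scale: "outer d (\<lambda>p. c * f p) = (c * cnj c) \<cdot>\<^sub>m outer d f"
  by (intro eq_matI) (simp_all add: mult_ac)

lemma unit_purification_le_valP:
  assumes "sqnorm (n * k) \<psi> = 1" and "\<Lambda> (ptrace2 n k (outer (n * k) \<psi>)) = Y"
  shows "ereal (Re (mtrace (X * ptrace2 n k (outer (n * k) \<psi>)))) \<le> valP n m k X \<Lambda> Y"
proof -
  let ?\<rho> = "ptrace2 n k (outer (n * k) \<psi>)"
  have "psd n ?\<rho>" unfolding ptrace2_outer by (rule psd_outer_sum)
  moreover have "mrank n ?\<rho> \<le> k"
    unfolding ptrace2_outer using mrank_outer_sum_le_card[of "{..<k}"] by simp
  moreover have "mtrace ?\<rho> = 1" using assms(1) by (simp add: mtrace_ptrace2_outer)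
  ultimately show ?thesis unfolding valP_def using assms(2) ptrace2_carrier by (intro Sup_upper) blast
qed

lemma purification_le_valP:
  assumes X: "X \<in> carrier_mat n n" and L: "lin_map_mat n m \<Lambda>"
    and norm: "sqnorm (n * k) \<psi> = complex_of_real s" and s: "0 < s"
    and LY: "\<Lambda> (ptrace2 n k (outer (n * k) \<psi>)) = complex_of_real s \<cdot>\<^sub>m Y"
  shows "ereal (Re (mtrace (X * ptrace2 n k (outer (n * k) \<psi>))) / s) \<le> valP n m k X \<Lambda> Y"
proof -
  let ?R = "ptrace2 n k (outer (n * k) \<psi>)"
  let ?c = "complex_of_real (1 / s)"
  define \<phi> where "\<phi> p = complex_of_real (1 / sqrt s) * \<psi> p" for p
  have "outer (n * k) \<phi> = ?c \<cdot>\<^sub>m outer (n * k) \<psi>"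
  proof -
    have "1 / sqrt s * (1 / sqrt s) = 1 / s" using s by (simp add: field_simps)
    then have "complex_of_real (1 / sqrt s) * cnj (complex_of_real (1 / sqrt s)) = ?c"
      by (metis complex_cnj_complex_of_real of_real_mult)
    then show ?thesis unfolding \<phi>_def outer_scale by simp
  qed
  then have R: "ptrace2 n k (outer (n * k) \<phi>) = ?c \<cdot>\<^sub>m ?R" by (simp add: ptrace2_smult)
  have "sqnorm (n * k) \<phi> = 1"
    using s norm unfolding mtrace_ptrace2_outer[symmetric] R mtrace_smult[OF ptrace2_carrier]
    by (simp add: mtrace_ptrace2_outer)
  moreover have "\<Lambda> (ptrace2 n k (outer (n * k) \<phi>)) = Y"
    using s unfolding R lin_map_matD(3)[OF L ptrace2_carrier] LY by (intro eq_matI) simp_all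
  ultimately have "ereal (Re (mtrace (X * ptrace2 n k (outer (n * k) \<phi>)))) \<le> valP n m k X \<Lambda> Y"
    by (rule unit_purification_le_valP)
  then have "ereal (Re (mtrace (X * (?c \<cdot>\<^sub>m ?R)))) \<le> valP n m k X \<Lambda> Y" unfolding R .
  moreover have "mtrace (X * (?c \<cdot>\<^sub>m ?R)) = ?c * mtrace (X * ?R)"
    using X by (simp add: mult_smult_distrib[OF X ptrace2_carrier] mtrace_smult[of _ n])
  then have "Re (mtrace (X * (?c \<cdot>\<^sub>m ?R))) = Re (mtrace (X * ?R)) / s" by simp
  ultimately show ?thesis by metis
qed

lemma ereal_weighted_sum_le:
  fixes s v :: "'a \<Rightarrow> real"
  assumes norm: "(\<Sum>t\<in>T. s t * s t) = 1" and nonneg: "\<And>t. t \<in> T \<Longrightarrow> 0 \<le> s t"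
    and bound: "\<And>t. t \<in> T \<Longrightarrow> 0 < s t \<Longrightarrow> ereal (v t / s t) \<le> c"
  shows "ereal (\<Sum>t\<in>T. s t * v t) \<le> c"
proof (cases c)
  case (real V)
  have "s t * v t \<le> (s t * s t) * V" if t: "t \<in> T" for t
  proof (cases "s t = 0")
    case False
    then have "0 < s t" using nonneg[OF t] by simp
    with bound[OF t this] show ?thesis by (simp add: real field_simps)
  qed simp
  then have "(\<Sum>t\<in>T. s t * v t) \<le> (\<Sum>t\<in>T. s t * s t) * V" by (simp add: sum_mono sum_distrib_right)
  then show ?thesis using norm real by simp
next
  case MInf
  have "\<exists>t\<in>T. s t \<noteq> 0"
  proof (rule ccontr)
    assume "\<not> (\<exists>t\<in>T. s t \<noteq> 0)"
    then have "(\<Sum>t\<in>T. s t * s t) = 0" by simp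
    with norm show False by simp
  qed
  then obtain t where t: "t \<in> T" "s t \<noteq> 0" by blast
  then have "0 < s t" using nonneg[OF t(1)] by simp
  then show ?thesis using bound[OF t(1)] MInf by simp
qed simp

lemma psd_eq_ptrace2_outer:
  assumes "psd n \<rho>" "mrank n \<rho> \<le> k"
  obtains \<psi> where "ptrace2 n k (outer (n * k) \<psi>) = \<rho>"
proof -
  obtain w where w: "\<rho> = outer_sum n {..<k} w" using psd_gram_decomposition[OF assms] by blast
  have "ptrace2 n k (outer (n * k) (\<lambda>a. w (a mod k) (a div k))) = \<rho>"
    unfolding w ptrace2_outer by (intro eq_matI) (auto intro!: sum.cong)
  then show ?thesis using that by blast
qed

lemma tensor_square_feasible_C:
  assumes L: "lin_map_mat d m L" and Y: "Y \<in> carrier_mat m m"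
    and norm: "sqnorm d \<psi> = 1" and LY: "L (outer d \<psi>) = Y"
  defines "\<Phi> \<equiv> outer (d * d) (tensor d \<psi> \<psi>)"
  shows "\<Phi> \<in> SEP d d" and "mtrace \<Phi> = 1" and "swap_op d * \<Phi> = \<Phi>"
    and "map_tensor_id d d m L \<Phi> = kron Y (ptrace1 d d \<Phi>)"
proof -
  have "\<Phi> = mat (d * d) (d * d) (\<lambda>x. \<Sum>i<1::nat. kron (outer d \<psi>) (outer d \<psi>) $$ x)"
    unfolding \<Phi>_def kron_outer by (intro eq_matI) simp_all
  then show "\<Phi> \<in> SEP d d" unfolding SEP_def using psd_outer[of d \<psi>]
    by (intro CollectI exI[of _ "1::nat"] exI[of _ "\<lambda>_. outer d \<psi>"]) simp
  have \<Phi>_sum: "\<Phi> = outer_sum (d * d) {()} (\<lambda>_. tensor d \<psi> \<psi>)"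
    unfolding \<Phi>_def outer_sum_singleton ..
  show "mtrace \<Phi> = 1" unfolding \<Phi>_sum mtrace_outer_sum sqnorm_tensor norm by simp
  show "swap_op d * \<Phi> = \<Phi>"
  proof (rule eq_matI)
    fix p q assume "p < dim_row \<Phi>" "q < dim_col \<Phi>"
    then have pq: "p < d * d" "q < d * d" unfolding \<Phi>_def by simp_all
    show "(swap_op d * \<Phi>) $$ (p, q) = \<Phi> $$ (p, q)"
      using swap_op_mult_index[OF _ pq, of \<Phi>] swap_index_less[OF pq(1)] tensor_swap_index[OF pq(1)] pq
      unfolding \<Phi>_def by simp
  qed (simp_all add: \<Phi>_def swap_op_def)
  have image: "map_tensor_id d d m L \<Phi> =
      mat (m * d) (m * d) (\<lambda>(i, j). \<psi> (i mod d) * cnj (\<psi> (j mod d)) * Y $$ (i div d, j div d))"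
    unfolding \<Phi>_sum map_tensor_id_outer_sum_tensor_square[OF L finite.emptyI[THEN finite.insertI]] LY
    by simp
  have marginal: "ptrace1 d d \<Phi> = outer d \<psi>"
    unfolding \<Phi>_sum ptrace1_outer_sum_tensor_square norm by (intro eq_matI) simp_all
  show "map_tensor_id d d m L \<Phi> = kron Y (ptrace1 d d \<Phi>)" (is "?l = ?r")
  proof (rule eq_matI)
    fix i j assume "i < dim_row ?r" "j < dim_col ?r"
    then have ij: "i < m * d" "j < m * d" using Y by (simp_all add: marginal)
    then have "0 < d" by (cases d) simp_all
    then show "?l $$ (i, j) = ?r $$ (i, j)"
      unfolding image marginal using ij Y by (simp add: kron_index less_mult_imp_div_less mult.commute)
  qed (use Y in \<open>simp_all add: image marginal\<close>)
qed

lemma valP_le_valC: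
  assumes X: "X \<in> carrier_mat n n" and L: "lin_map_mat n m \<Lambda>" and Y: "Y \<in> carrier_mat m m"
  shows "valP n m k X \<Lambda> Y \<le> valC n m k X \<Lambda> Y"
  unfolding valP_def
proof (rule Sup_least)
  fix x assume "x \<in> {ereal (Re (mtrace (X * \<rho>))) | \<rho>.
    \<rho> \<in> carrier_mat n n \<and> \<Lambda> \<rho> = Y \<and> mtrace \<rho> = 1 \<and> psd n \<rho> \<and> mrank n \<rho> \<le> k}"
  then obtain \<rho> where x: "x = ereal (Re (mtrace (X * \<rho>)))"
    and \<rho>: "\<Lambda> \<rho> = Y" "mtrace \<rho> = 1" "psd n \<rho>" "mrank n \<rho> \<le> k" by blast
  obtain \<psi> where \<psi>: "ptrace2 n k (outer (n * k) \<psi>) = \<rho>" using psd_eq_ptrace2_outer[OF \<rho>(3,4)] .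
  have norm: "sqnorm (n * k) \<psi> = 1" using \<rho>(2) \<psi> mtrace_ptrace2_outer by metis
  have LY: "\<Lambda> (ptrace2 n k (outer (n * k) \<psi>)) = Y" using \<psi> \<rho>(1) by simp
  let ?\<Phi> = "outer ((n * k) * (n * k)) (tensor (n * k) \<psi> \<psi>)"
  note feasible = tensor_square_feasible_C[OF lin_map_comp_ptrace2[OF L] Y norm LY]
  have "mtrace (kron (kron X (1\<^sub>m k)) (1\<^sub>m (n * k)) * ?\<Phi>) = mtrace (X * \<rho>)"
    using mtrace_objective_outer_sum_tensor_square[OF X, where T = "{()}" and \<psi> = "\<lambda>_. \<psi>"] \<psi> norm
    by (simp add: outer_sum_singleton)
  with feasible show "x \<le> valC n m k X \<Lambda> Y"
    unfolding valC_def Let_def x by (intro Sup_upper CollectI exI[of _ ?\<Phi>]) simp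
qed

lemma valC_le_valP:
  assumes X: "X \<in> carrier_mat n n" and L: "lin_map_mat n m \<Lambda>" and Y: "Y \<in> carrier_mat m m"
  shows "valC n m k X \<Lambda> Y \<le> valP n m k X \<Lambda> Y"
  unfolding valC_def Let_def
proof (rule Sup_least)
  fix x assume "x \<in> {ereal (Re (mtrace (kron (kron X (1\<^sub>m k)) (1\<^sub>m (n * k)) * \<Phi>))) | \<Phi>.
      \<Phi> \<in> SEP (n * k) (n * k) \<and> mtrace \<Phi> = 1 \<and> swap_op (n * k) * \<Phi> = \<Phi> \<and>
      map_tensor_id (n * k) (n * k) m (\<lambda>\<rho>. \<Lambda> (ptrace2 n k \<rho>)) \<Phi> = kron Y (ptrace1 (n * k) (n * k) \<Phi>)}"
  then obtain \<Phi> where x: "x = ereal (Re (mtrace (kron (kron X (1\<^sub>m k)) (1\<^sub>m (n * k)) * \<Phi>)))"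
    and sep: "\<Phi> \<in> SEP (n * k) (n * k)" and tr: "mtrace \<Phi> = 1" and sw: "swap_op (n * k) * \<Phi> = \<Phi>"
    and con: "map_tensor_id (n * k) (n * k) m (\<lambda>\<rho>. \<Lambda> (ptrace2 n k \<rho>)) \<Phi> = kron Y (ptrace1 (n * k) (n * k) \<Phi>)"
    by blast
  obtain T :: "(nat \<times> nat \<times> nat) set" and \<psi>
    where T: "finite T" and \<Phi>: "\<Phi> = outer_sum ((n * k) * (n * k)) T (\<lambda>t. tensor (n * k) (\<psi> t) (\<psi> t))"
    using SEP_swap_invariant_eq_outer_sum_tensor_square[OF sep sw] by blast
  define s where "s t = (\<Sum>a<n * k. (cmod (\<psi> t a))\<^sup>2)" for t
  define v where "v t = Re (mtrace (X * ptrace2 n k (outer (n * k) (\<psi> t))))" for t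
  have norm: "sqnorm (n * k) (\<psi> t) = complex_of_real (s t)" for t
    unfolding s_def by (rule sqnorm_real)
  have "complex_of_real (\<Sum>t\<in>T. s t * s t) = 1"
    using tr unfolding \<Phi> mtrace_outer_sum sqnorm_tensor norm by simp
  then have weights: "(\<Sum>t\<in>T. s t * s t) = 1" using of_real_eq_1_iff by blast
  have "x = ereal (\<Sum>t\<in>T. s t * v t)"
    unfolding x \<Phi> mtrace_objective_outer_sum_tensor_square[OF X] norm v_def by (simp add: Re_sum)
  moreover have "ereal (v t / s t) \<le> valP n m k X \<Lambda> Y" if "t \<in> T" "0 < s t" for t
    using map_tensor_id_constraint_termwise[OF lin_map_comp_ptrace2[OF L] Y T \<Phi> con that(1)]
    unfolding v_def by (intro purification_le_valP[OF X L norm that(2)]) (simp add: norm)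
  ultimately show "x \<le> valP n m k X \<Lambda> Y"
    using ereal_weighted_sum_le[OF weights] by (simp add: s_def sum_nonneg)
qed

theorem theorem1:
  fixes n m k :: nat and X Y :: "complex mat" and \<Lambda> :: "complex mat \<Rightarrow> complex mat"
  assumes "0 < n" and "0 < m" and "0 < k"
    and "X \<in> carrier_mat n n" and "hermitian X"
    and "lin_map_mat n m \<Lambda>"
    and "Y \<in> carrier_mat m m"
  shows "valP n m k X \<Lambda> Y = valC n m k X \<Lambda> Y"
  using valP_le_valC[OF assms(4,6,7)] valC_le_valP[OF assms(4,6,7)] by (rule antisym)

end
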